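(* Let $P\in\mathbb{O}P^2$ and let $Z\in T^{\mathbb{C}}_P\mathbb{O}P^2$ be isotropic, i.e. $\operatorname{tr}(Z\circ Z)=0$. Then the complex-linear endomorphism $\hat Z$ of $\mathfrak{h}^0_3(\mathbb{O})^{\mathbb{C}}$ defined by $$\hat Z(X)=-4\,Z\circ X+4\,Z\circ(P\circ X)+4\,P\circ(Z\circ X)$$ is nilpotent with nilorder $r\le 5$ (i.e. $\hat Z^5=0$).
   Context: $\mathfrak{h}_3(\mathbb{O})$ is the real vector space of hermitian $3\times3$ octonionic matrices with Jordan product $a\circ b=\frac12(ab+ba)$, extended complex-bilinearly to the complexification; $\mathfrak{h}^0_3(\mathbb{O})$ is the subspace of traceless matrices. $\mathbb{O}P^2=\{P\in\mathfrak{h}_3(\mathbb{O}):P\circ P=P,\ \operatorname{tr}P=1\}$, $T_P\mathbb{O}P^2=\{Z\in\mathfrak{h}_3(\mathbb{O}):2P\circ Z=Z\}$ and $T^{\mathbb{C}}_P\mathbb{O}P^2$ is its complexification. (For real $Z$, $\hat Z$ is the derivative in direction $Z$ of the orthogonal projection onto the $10$-dimensional subspace $V_P\subset\mathfrak{h}^0_3(\mathbb{O})$ corresponding to $P$, mapping $V_P\to V_P^\perp$ and $V_P^\perp\to V_P$.) The nilorder is the least $r$ with $\hat Z^r=0$. *)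

theory Defs
  imports Complex_Main "HOL-Library.Product_Plus" "HOL-Library.Numeral_Type"
begin

text \<open>Starting from the scalar field complex with trivial conjugation (the complexification is
  complex-linear, so the octonionic conjugation is extended complex-linearly), three doublings
  give the complexified octonions O tensor C.\<close>

type_synonym c2 = "complex \<times> complex"
type_synonym c4 = "c2 \<times> c2"
type_synonym oc = "c4 \<times> c4"

fun conj1 :: "c2 \<Rightarrow> c2" where "conj1 (a, b) = (a, - b)"
fun mul1 :: "c2 \<Rightarrow> c2 \<Rightarrow> c2" where
  "mul1 (a, b) (c, d) = (a * c - d * b, d * a + b * c)"

fun conj2 :: "c4 \<Rightarrow> c4" where "conj2 (a, b) = (conj1 a, - b)"
fun mul2 :: "c4 \<Rightarrow> c4 \<Rightarrow> c4" where
  "mul2 (a, b) (c, d) = (mul1 a c - mul1 (conj1 d) b, mul1 d a + mul1 b (conj1 c))"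

fun oconj :: "oc \<Rightarrow> oc" where "oconj (a, b) = (conj2 a, - b)"
fun omul :: "oc \<Rightarrow> oc \<Rightarrow> oc" where
  "omul (a, b) (c, d) = (mul2 a c - mul2 (conj2 d) b, mul2 d a + mul2 b (conj2 c))"

definition ofc :: "complex \<Rightarrow> oc" where
  "ofc s = (((s, 0), (0, 0)), ((0, 0), (0, 0)))"

definition oscale :: "complex \<Rightarrow> oc \<Rightarrow> oc" where
  "oscale s x = omul (ofc s) x"

fun ore :: "oc \<Rightarrow> complex" where "ore (((a, _), _), _) = a"

fun oreal :: "oc \<Rightarrow> bool" where
  "oreal (((a1, a2), (a3, a4)), ((a5, a6), (a7, a8))) =
     (\<forall>z \<in> {a1, a2, a3, a4, a5, a6, a7, a8}. Im z = 0)"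

type_synonym omat = "3 \<Rightarrow> 3 \<Rightarrow> oc"

definition mmul :: "omat \<Rightarrow> omat \<Rightarrow> omat" where
  "mmul A B = (\<lambda>i j. \<Sum>k\<in>UNIV. omul (A i k) (B k j))"

definition jordan :: "omat \<Rightarrow> omat \<Rightarrow> omat" (infixl "\<circ>\<^sub>J" 70) where
  "jordan A B = (\<lambda>i j. oscale (1/2) (mmul A B i j + mmul B A i j))"

definition mscale :: "complex \<Rightarrow> omat \<Rightarrow> omat" where
  "mscale s A = (\<lambda>i j. oscale s (A i j))"

definition madd :: "omat \<Rightarrow> omat \<Rightarrow> omat" where
  "madd A B = (\<lambda>i j. A i j + B i j)"

definition mtr :: "omat \<Rightarrow> complex" where
  "mtr A = (\<Sum>i\<in>UNIV. ore (A i i))"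

text \<open>Complexification of h_3(O): matrices hermitian w.r.t. the complex-linear
  octonionic conjugation.\<close>
definition herm :: "omat \<Rightarrow> bool" where
  "herm A \<longleftrightarrow> (\<forall>i j. A j i = oconj (A i j))"

definition herm0 :: "omat set" where
  "herm0 = {A. herm A \<and> mtr A = 0}"

definition mreal :: "omat \<Rightarrow> bool" where
  "mreal A \<longleftrightarrow> (\<forall>i j. oreal (A i j))"

definition OP2 :: "omat set" where
  "OP2 = {P. herm P \<and> mreal P \<and> P \<circ>\<^sub>J P = P \<and> mtr P = 1}"

definition TC :: "omat \<Rightarrow> omat set" where
  "TC P = {Z. herm Z \<and> mscale 2 (P \<circ>\<^sub>J Z) = Z}"

definition Zhat :: "omat \<Rightarrow> omat \<Rightarrow> omat \<Rightarrow> omat" where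
  "Zhat P Z X = madd (madd (mscale (-4) (Z \<circ>\<^sub>J X)) (mscale 4 (Z \<circ>\<^sub>J (P \<circ>\<^sub>J X))))
                     (mscale 4 (P \<circ>\<^sub>J (Z \<circ>\<^sub>J X)))"

end

theory Submission
  imports Defs
begin

text \<open>The automorphisms of the complexified exceptional Jordan algebra that preserve the real form
  act transitively on the octonionic projective plane: triality maps turn off-diagonal entries into
  nonnegative real scalars and rotations of coordinate planes clear diagonal entries, which moves P
  to E11 = diag(1, 0, 0). As Z-hat is built from the Jordan product it is equivariant, so it suffices
  to take P = E11. Then the tangent vectors Z have only the off-diagonal entries z_2, z_3, isotropy
  says N(z_2) + N(z_3) = 0, and a computation with the alternative and Moufang laws shows that Z-hat
  maps every matrix into the (x_2, x_3)-part and that its fourth power vanishes there.\<close>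

section \<open>Complex octonions\<close>

lemma oc_induct:
  "(\<And>x1 x2 x3 x4 x5 x6 x7 x8. P (((x1, x2), (x3, x4)), ((x5, x6), (x7, x8)))) \<Longrightarrow> P x"
  by (metis prod.exhaust)

definition oinner :: "oc \<Rightarrow> oc \<Rightarrow> complex" where
  "oinner x y = ore (omul x (oconj y))"

definition onorm :: "oc \<Rightarrow> complex" where
  "onorm x = oinner x x"

lemmas oc_defs = ofc_def oscale_def oinner_def onorm_def zero_prod_def

lemma omul_add_left: "omul (x + y) z = omul x z + omul y z"
  by (induct x rule: oc_induct; induct y rule: oc_induct; induct z rule: oc_induct)
    (simp add: algebra_simps)

lemma omul_add_right: "omul x (y + z) = omul x y + omul x z"
  by (induct x rule: oc_induct; induct y rule: oc_induct; induct z rule: oc_induct)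
    (simp add: algebra_simps)

lemma omul_diff_left: "omul (x - y) z = omul x z - omul y z"
  by (induct x rule: oc_induct; induct y rule: oc_induct; induct z rule: oc_induct)
    (simp add: algebra_simps)

lemma omul_diff_right: "omul x (y - z) = omul x y - omul x z"
  by (induct x rule: oc_induct; induct y rule: oc_induct; induct z rule: oc_induct)
    (simp add: algebra_simps)

lemma omul_minus_left: "omul (- x) y = - omul x y"
  by (induct x rule: oc_induct; induct y rule: oc_induct) (simp add: algebra_simps)

lemma omul_minus_right: "omul x (- y) = - omul x y"
  by (induct x rule: oc_induct; induct y rule: oc_induct) (simp add: algebra_simps)

lemma omul_zero_left: "omul 0 x = 0"
  by (induct x rule: oc_induct) (simp add: zero_prod_def)

lemma omul_zero_right: "omul x 0 = 0"
  by (induct x rule: oc_induct) (simp add: zero_prod_def)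

lemma omul_oscale_left: "omul (oscale s x) y = oscale s (omul x y)"
  by (induct x rule: oc_induct; induct y rule: oc_induct) (simp add: oc_defs algebra_simps)

lemma omul_oscale_right: "omul x (oscale s y) = oscale s (omul x y)"
  by (induct x rule: oc_induct; induct y rule: oc_induct) (simp add: oc_defs algebra_simps)

lemma omul_ofc_left: "omul (ofc s) x = oscale s x"
  by (simp add: oscale_def)

lemma omul_ofc_right: "omul x (ofc s) = oscale s x"
  by (induct x rule: oc_induct) (simp add: oc_defs algebra_simps)

lemma oscale_add: "oscale s (x + y) = oscale s x + oscale s y"
  by (simp add: oscale_def omul_add_right)

lemma oscale_add_left: "oscale (s + t) x = oscale s x + oscale t x"
  by (induct x rule: oc_induct) (simp add: oc_defs algebra_simps)

lemma oscale_diff: "oscale s (x - y) = oscale s x - oscale s y"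
  by (simp add: oscale_def omul_diff_right)

lemma oscale_diff_left: "oscale (s - t) x = oscale s x - oscale t x"
  by (induct x rule: oc_induct) (simp add: oc_defs algebra_simps)

lemma oscale_minus: "oscale s (- x) = - oscale s x"
  by (simp add: oscale_def omul_minus_right)

lemma oscale_minus_left: "oscale (- s) x = - oscale s x"
  by (induct x rule: oc_induct) (simp add: oc_defs algebra_simps)

lemma oscale_oscale: "oscale s (oscale t x) = oscale (s * t) x"
  by (induct x rule: oc_induct) (simp add: oc_defs algebra_simps)

lemma oscale_one: "oscale 1 x = x"
  by (induct x rule: oc_induct) (simp add: oc_defs)

lemma oscale_zero_left: "oscale 0 x = 0"
  by (induct x rule: oc_induct) (simp add: oc_defs)

lemma oscale_zero: "oscale s 0 = 0"
  by (simp add: oscale_def omul_zero_right)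

lemma oscale_ofc: "oscale s (ofc t) = ofc (s * t)"
  by (simp add: oc_defs)

lemma ofc_add: "ofc (s + t) = ofc s + ofc t"
  by (simp add: oc_defs)

lemma ofc_zero: "ofc 0 = 0"
  by (simp add: oc_defs)

lemma ofc_inject: "ofc s = ofc t \<longleftrightarrow> s = t"
  by (simp add: ofc_def)

lemma oconj_add: "oconj (x + y) = oconj x + oconj y"
  by (induct x rule: oc_induct; induct y rule: oc_induct) simp

lemma oconj_diff: "oconj (x - y) = oconj x - oconj y"
  by (induct x rule: oc_induct; induct y rule: oc_induct) simp

lemma oconj_minus: "oconj (- x) = - oconj x"
  by (induct x rule: oc_induct) simp

lemma oconj_zero: "oconj 0 = 0"
  by (simp add: zero_prod_def)

lemma oconj_oscale: "oconj (oscale s x) = oscale s (oconj x)"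
  by (induct x rule: oc_induct) (simp add: oc_defs)

lemma oconj_oconj: "oconj (oconj x) = x"
  by (induct x rule: oc_induct) simp

lemma oconj_omul: "oconj (omul x y) = omul (oconj y) (oconj x)"
  by (induct x rule: oc_induct; induct y rule: oc_induct) (simp add: algebra_simps)

lemma oconj_ofc: "oconj (ofc s) = ofc s"
  by (simp add: ofc_def)

lemma oconj_fixed_iff: "oconj x = x \<longleftrightarrow> x = ofc (ore x)"
  by (induct x rule: oc_induct) (auto simp: ofc_def)

lemma ore_add: "ore (x + y) = ore x + ore y"
  by (induct x rule: oc_induct; induct y rule: oc_induct) simp

lemma ore_oscale: "ore (oscale s x) = s * ore x"
  by (induct x rule: oc_induct) (simp add: oc_defs)

lemma ore_ofc: "ore (ofc s) = s"
  by (simp add: ofc_def)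

lemma ore_zero: "ore 0 = 0"
  by (simp add: zero_prod_def)

lemma ore_oconj: "ore (oconj x) = ore x"
  by (induct x rule: oc_induct) simp

lemma oinner_commute: "oinner x y = oinner y x"
  by (induct x rule: oc_induct; induct y rule: oc_induct) (simp add: oc_defs algebra_simps)

lemma oinner_add_left: "oinner (x + y) z = oinner x z + oinner y z"
  by (simp add: oinner_def oconj_add omul_add_left ore_add)

lemma oinner_add_right: "oinner x (y + z) = oinner x y + oinner x z"
  by (simp add: oinner_def oconj_add omul_add_right ore_add)

lemma oinner_oscale_left: "oinner (oscale s x) y = s * oinner x y"
  by (simp add: oinner_def omul_oscale_left ore_oscale)

lemma oinner_oscale_right: "oinner x (oscale s y) = s * oinner x y"
  by (simp add: oinner_def oconj_oscale omul_oscale_right ore_oscale)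

lemma oinner_minus_left: "oinner (- x) y = - oinner x y"
  by (induct x rule: oc_induct; induct y rule: oc_induct) (simp add: oc_defs algebra_simps)

lemma oinner_minus_right: "oinner x (- y) = - oinner x y"
  by (induct x rule: oc_induct; induct y rule: oc_induct) (simp add: oc_defs algebra_simps)

lemma oinner_diff_left: "oinner (x - y) z = oinner x z - oinner y z"
  by (induct x rule: oc_induct; induct y rule: oc_induct; induct z rule: oc_induct)
    (simp add: oc_defs algebra_simps)

lemma oinner_diff_right: "oinner x (y - z) = oinner x y - oinner x z"
  by (induct x rule: oc_induct; induct y rule: oc_induct; induct z rule: oc_induct)
    (simp add: oc_defs algebra_simps)

lemma oinner_zero_left: "oinner 0 x = 0"
  by (simp add: oinner_def omul_zero_left ore_zero)

lemma oinner_zero_right: "oinner x 0 = 0"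
  by (simp add: oinner_def oconj_zero omul_zero_right ore_zero)

lemma omul_oconj_self: "omul x (oconj x) = ofc (onorm x)"
  by (induct x rule: oc_induct) (simp add: oc_defs; algebra)

lemma omul_oconj_add_swap: "omul x (oconj y) + omul y (oconj x) = ofc (2 * oinner x y)"
  by (induct x rule: oc_induct; induct y rule: oc_induct) (simp add: oc_defs; algebra)

lemma oconj_omul_add_swap: "omul (oconj x) y + omul (oconj y) x = ofc (2 * oinner x y)"
  by (induct x rule: oc_induct; induct y rule: oc_induct) (simp add: oc_defs; algebra)

lemma onorm_oscale: "onorm (oscale s x) = s * s * onorm x"
  by (simp add: onorm_def oinner_oscale_left oinner_oscale_right)

lemma onorm_ofc: "onorm (ofc s) = s * s"
  by (simp add: oc_defs)

lemma onorm_oconj: "onorm (oconj x) = onorm x"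
  by (induct x rule: oc_induct) (simp add: oc_defs; algebra)

lemma onorm_omul: "onorm (omul x y) = onorm x * onorm y"
  by (induct x rule: oc_induct; induct y rule: oc_induct) (simp add: oc_defs; algebra)

lemma omul_oconj_left_cancel: "omul x (omul (oconj x) y) = oscale (onorm x) y"
  by (induct x rule: oc_induct; induct y rule: oc_induct) (simp add: oc_defs; algebra)

lemma oconj_omul_left_cancel: "omul (oconj x) (omul x y) = oscale (onorm x) y"
  by (induct x rule: oc_induct; induct y rule: oc_induct) (simp add: oc_defs; algebra)

lemma omul_oconj_right_cancel: "omul (omul y x) (oconj x) = oscale (onorm x) y"
  by (induct x rule: oc_induct; induct y rule: oc_induct) (simp add: oc_defs; algebra)

lemma oconj_omul_right_cancel: "omul (omul y (oconj x)) x = oscale (onorm x) y"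
  by (induct x rule: oc_induct; induct y rule: oc_induct) (simp add: oc_defs; algebra)

lemma omul_oconj_right_polar:
  "omul (omul x y) (oconj z) + omul (omul x z) (oconj y) = oscale (2 * oinner y z) x"
  by (induct x rule: oc_induct; induct y rule: oc_induct; induct z rule: oc_induct)
    (simp add: oc_defs; algebra)

lemma oconj_omul_left_polar:
  "omul (oconj x) (omul y z) + omul (oconj y) (omul x z) = oscale (2 * oinner x y) z"
  by (induct x rule: oc_induct; induct y rule: oc_induct; induct z rule: oc_induct)
    (simp add: oc_defs; algebra)

lemma oinner_omul_left_adjoint: "oinner x (omul (oconj y) v) = oinner (omul y x) v"
  by (induct x rule: oc_induct; induct y rule: oc_induct; induct v rule: oc_induct)
    (simp add: oc_defs; algebra)

lemma oinner_omul_right_adjoint: "oinner x (omul v (oconj y)) = oinner (omul x y) v"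
  by (induct x rule: oc_induct; induct y rule: oc_induct; induct v rule: oc_induct)
    (simp add: oc_defs; algebra)

lemma oinner_omul_right: "oinner (omul x z) (omul y z) = onorm z * oinner x y"
  by (induct x rule: oc_induct; induct y rule: oc_induct; induct z rule: oc_induct)
    (simp add: oc_defs; algebra)

lemma oinner_omul_left: "oinner (omul z x) (omul z y) = onorm z * oinner x y"
  by (induct x rule: oc_induct; induct y rule: oc_induct; induct z rule: oc_induct)
    (simp add: oc_defs; algebra)

lemma oconj_moufang:
  "oconj (omul (omul u x) (omul y u)) = omul (omul (oconj u) (oconj (omul x y))) (oconj u)"
  by (induct x rule: oc_induct; induct y rule: oc_induct; induct u rule: oc_induct)
    (simp add: oc_defs; algebra)

lemma oconj_moufang_right:
  "oconj (omul (omul x u) (omul (omul (oconj u) y) (oconj u))) = oscale (onorm u) (omul u (oconj (omul x y)))"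
  by (induct x rule: oc_induct; induct y rule: oc_induct; induct u rule: oc_induct)
    (simp add: oc_defs; algebra)

lemma oconj_moufang_left:
  "oconj (omul (omul (omul (oconj u) x) (oconj u)) (omul u y)) = oscale (onorm u) (omul (oconj (omul x y)) u)"
  by (induct x rule: oc_induct; induct y rule: oc_induct; induct u rule: oc_induct)
    (simp add: oc_defs; algebra)

lemma oreal_omul: "oreal x \<Longrightarrow> oreal y \<Longrightarrow> oreal (omul x y)"
  by (induct x rule: oc_induct; induct y rule: oc_induct) simp

lemma oreal_oconj: "oreal x \<Longrightarrow> oreal (oconj x)"
  by (induct x rule: oc_induct) simp

lemma oreal_add: "oreal x \<Longrightarrow> oreal y \<Longrightarrow> oreal (x + y)"
  by (induct x rule: oc_induct; induct y rule: oc_induct) simp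

lemma oreal_ofc: "Im s = 0 \<Longrightarrow> oreal (ofc s)"
  by (simp add: ofc_def)

lemma oreal_oscale: "Im s = 0 \<Longrightarrow> oreal x \<Longrightarrow> oreal (oscale s x)"
  by (induct x rule: oc_induct) (simp add: oc_defs)

lemma oreal_onorm: "oreal x \<Longrightarrow> Im (onorm x) = 0 \<and> 0 \<le> Re (onorm x)"
  by (induct x rule: oc_induct) (simp add: oc_defs; smt (verit) zero_le_square)

lemma oreal_onorm_eq_0: "oreal x \<Longrightarrow> onorm x = 0 \<longleftrightarrow> x = 0"
  by (induct x rule: oc_induct)
    (simp add: oc_defs complex_eq_iff; smt (verit) zero_le_square mult_eq_0_iff)

section \<open>Hermitian matrices in coordinates\<close>

lemma exhaust_three: "(i::3) = 0 \<or> i = 1 \<or> i = 2"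
proof (induct i)
  case (of_int z)
  then have "z = 0 \<or> z = 1 \<or> z = 2" by fastforce
  then show ?case by auto
qed

lemma UNIV_three: "(UNIV::3 set) = {0, 1, 2}"
  using exhaust_three by auto

lemma sum_UNIV_three: "sum f (UNIV::3 set) = f 0 + f 1 + f 2"
  unfolding UNIV_three by (simp add: ac_simps)

lemma omat_eqI:
  fixes A B :: omat
  assumes "A 0 0 = B 0 0" "A 0 1 = B 0 1" "A 0 2 = B 0 2" "A 1 0 = B 1 0" "A 1 1 = B 1 1"
    "A 1 2 = B 1 2" "A 2 0 = B 2 0" "A 2 1 = B 2 1" "A 2 2 = B 2 2"
  shows "A = B"
proof (intro ext)
  fix i j :: 3
  show "A i j = B i j" using assms exhaust_three[of i] exhaust_three[of j] by auto
qed

lemma mmul_three: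
  "mmul A B i j = omul (A i 0) (B 0 j) + omul (A i 1) (B 1 j) + omul (A i 2) (B 2 j)"
  by (simp add: mmul_def sum_UNIV_three)

text \<open>Indices run over 0, 1, 2; the off-diagonal entry x_i sits opposite the diagonal entry a_i.\<close>
definition hmat :: "complex \<Rightarrow> complex \<Rightarrow> complex \<Rightarrow> oc \<Rightarrow> oc \<Rightarrow> oc \<Rightarrow> omat" where
  "hmat a1 a2 a3 x1 x2 x3 = (\<lambda>i j.
     if i = 0 then (if j = 0 then ofc a1 else if j = 1 then x3 else oconj x2)
     else if i = 1 then (if j = 0 then oconj x3 else if j = 1 then ofc a2 else x1)
     else (if j = 0 then x2 else if j = 1 then oconj x1 else ofc a3))"

lemma hmat_simps [simp]:
  "hmat a1 a2 a3 x1 x2 x3 0 0 = ofc a1" "hmat a1 a2 a3 x1 x2 x3 0 1 = x3"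
  "hmat a1 a2 a3 x1 x2 x3 0 2 = oconj x2" "hmat a1 a2 a3 x1 x2 x3 1 0 = oconj x3"
  "hmat a1 a2 a3 x1 x2 x3 1 1 = ofc a2" "hmat a1 a2 a3 x1 x2 x3 1 2 = x1"
  "hmat a1 a2 a3 x1 x2 x3 2 0 = x2" "hmat a1 a2 a3 x1 x2 x3 2 1 = oconj x1"
  "hmat a1 a2 a3 x1 x2 x3 2 2 = ofc a3"
  by (simp_all add: hmat_def)

lemma hmat_eq_iff:
  "hmat a1 a2 a3 x1 x2 x3 = hmat b1 b2 b3 y1 y2 y3 \<longleftrightarrow>
     a1 = b1 \<and> a2 = b2 \<and> a3 = b3 \<and> x1 = y1 \<and> x2 = y2 \<and> x3 = y3"
proof
  assume "hmat a1 a2 a3 x1 x2 x3 = hmat b1 b2 b3 y1 y2 y3"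
  then have "hmat a1 a2 a3 x1 x2 x3 i j = hmat b1 b2 b3 y1 y2 y3 i j" for i j by simp
  from this[of 0 0] this[of 1 1] this[of 2 2] this[of 1 2] this[of 2 0] this[of 0 1]
  show "a1 = b1 \<and> a2 = b2 \<and> a3 = b3 \<and> x1 = y1 \<and> x2 = y2 \<and> x3 = y3"
    by (simp add: ofc_inject)
qed simp

lemma herm_hmat [simp]: "herm (hmat a1 a2 a3 x1 x2 x3)"
  unfolding herm_def
proof (intro allI)
  fix i j :: 3
  show "hmat a1 a2 a3 x1 x2 x3 j i = oconj (hmat a1 a2 a3 x1 x2 x3 i j)"
    using exhaust_three[of i] exhaust_three[of j] by (auto simp: oconj_oconj oconj_ofc)
qed

lemma hmat_of_herm:
  assumes "herm A"
  shows "A = hmat (ore (A 0 0)) (ore (A 1 1)) (ore (A 2 2)) (A 1 2) (A 2 0) (A 0 1)"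
proof -
  have sym: "A j i = oconj (A i j)" for i j using assms unfolding herm_def by blast
  have diag: "A i i = ofc (ore (A i i))" for i using sym[of i i] oconj_fixed_iff by metis
  show ?thesis by (rule omat_eqI; simp only: hmat_simps; rule diag sym refl)
qed

lemma herm_cases:
  assumes "herm A"
  obtains a1 a2 a3 x1 x2 x3 where "A = hmat a1 a2 a3 x1 x2 x3"
  using hmat_of_herm[OF assms] by blast

lemma madd_hmat:
  "madd (hmat a1 a2 a3 x1 x2 x3) (hmat b1 b2 b3 y1 y2 y3) =
     hmat (a1 + b1) (a2 + b2) (a3 + b3) (x1 + y1) (x2 + y2) (x3 + y3)"
  by (rule omat_eqI) (simp_all add: madd_def ofc_add oconj_add)

lemma mscale_hmat:
  "mscale s (hmat a1 a2 a3 x1 x2 x3) =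
     hmat (s * a1) (s * a2) (s * a3) (oscale s x1) (oscale s x2) (oscale s x3)"
  by (rule omat_eqI) (simp_all add: mscale_def oscale_ofc oconj_oscale)

lemma mtr_hmat: "mtr (hmat a1 a2 a3 x1 x2 x3) = a1 + a2 + a3"
  by (simp add: mtr_def sum_UNIV_three ore_ofc)

lemma hmat_zero: "hmat 0 0 0 0 0 0 = (\<lambda>i j. 0)"
  by (rule omat_eqI) (simp_all add: ofc_zero oconj_zero)

lemma mreal_hmat_iff:
  "mreal (hmat a1 a2 a3 x1 x2 x3) \<longleftrightarrow>
     Im a1 = 0 \<and> Im a2 = 0 \<and> Im a3 = 0 \<and> oreal x1 \<and> oreal x2 \<and> oreal x3"
proof
  assume "mreal (hmat a1 a2 a3 x1 x2 x3)"
  then have "oreal (hmat a1 a2 a3 x1 x2 x3 i j)" for i j by (simp add: mreal_def)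
  from this[of 0 0] this[of 1 1] this[of 2 2] this[of 1 2] this[of 2 0] this[of 0 1]
  show "Im a1 = 0 \<and> Im a2 = 0 \<and> Im a3 = 0 \<and> oreal x1 \<and> oreal x2 \<and> oreal x3"
    by (simp add: ofc_def)
next
  assume "Im a1 = 0 \<and> Im a2 = 0 \<and> Im a3 = 0 \<and> oreal x1 \<and> oreal x2 \<and> oreal x3"
  then have "oreal (hmat a1 a2 a3 x1 x2 x3 i j)" for i j
    using exhaust_three[of i] exhaust_three[of j] by (auto simp: oreal_ofc oreal_oconj)
  then show "mreal (hmat a1 a2 a3 x1 x2 x3)" by (simp add: mreal_def)
qed

lemma oscale_half_sum3:
  assumes "p + p' = ofc (2 * \<alpha>)" "q + q' = ofc (2 * \<beta>)" "r + r' = ofc (2 * \<gamma>)"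
  shows "oscale (1/2) (p + q + r + (p' + q' + r')) = ofc (\<alpha> + \<beta> + \<gamma>)"
proof -
  have "p + q + r + (p' + q' + r') = (p + p') + (q + q') + (r + r')" by (simp add: ac_simps)
  then show ?thesis using assms by (simp add: oscale_ofc ofc_add[symmetric] algebra_simps)
qed

lemma jordan_hmat:
  "hmat a1 a2 a3 x1 x2 x3 \<circ>\<^sub>J hmat b1 b2 b3 y1 y2 y3 = hmat
     (a1 * b1 + oinner x3 y3 + oinner x2 y2)
     (a2 * b2 + oinner x3 y3 + oinner x1 y1)
     (a3 * b3 + oinner x2 y2 + oinner x1 y1)
     (oscale (1/2) (oscale (a2 + a3) y1 + oscale (b2 + b3) x1 + oconj (omul y2 x3) + oconj (omul x2 y3)))
     (oscale (1/2) (oscale (a1 + a3) y2 + oscale (b1 + b3) x2 + oconj (omul y3 x1) + oconj (omul x3 y1)))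
     (oscale (1/2) (oscale (a1 + a2) y3 + oscale (b1 + b2) x3 + oconj (omul y1 x2) + oconj (omul x1 y2)))"
  (is "?J = hmat ?d1 ?d2 ?d3 ?o1 ?o2 ?o3")
proof -
  have scalars: "omul (ofc a) (ofc b) + omul (ofc b) (ofc a) = ofc (2 * (a * b))" for a b
    by (simp add: omul_ofc_left oscale_ofc ofc_add[symmetric] mult.commute)
  note pairs = scalars omul_oconj_add_swap oconj_omul_add_swap
  have d1: "?J 0 0 = ofc ?d1"
    unfolding jordan_def mmul_three hmat_simps by (rule oscale_half_sum3) (rule pairs)+
  have "?J 1 1 = ofc (oinner x3 y3 + a2 * b2 + oinner x1 y1)"
    unfolding jordan_def mmul_three hmat_simps by (rule oscale_half_sum3) (rule pairs)+
  then have d2: "?J 1 1 = ofc ?d2" by (simp add: ac_simps)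
  have "?J 2 2 = ofc (oinner x2 y2 + oinner x1 y1 + a3 * b3)"
    unfolding jordan_def mmul_three hmat_simps by (rule oscale_half_sum3) (rule pairs)+
  then have d3: "?J 2 2 = ofc ?d3" by (simp add: ac_simps)
  show ?thesis
    by (rule omat_eqI, simp_all only: hmat_simps d1 d2 d3)
      (simp_all add: jordan_def mmul_three omul_ofc_left omul_ofc_right oconj_omul oconj_add oconj_oscale
        oconj_oconj oconj_ofc oscale_add oscale_add_left oscale_oscale omul_add_left omul_add_right
        omul_oscale_left omul_oscale_right algebra_simps)
qed

lemma herm_jordan: "herm A \<Longrightarrow> herm B \<Longrightarrow> herm (A \<circ>\<^sub>J B)"
  by (metis herm_cases jordan_hmat herm_hmat)

lemma herm_madd: "herm A \<Longrightarrow> herm B \<Longrightarrow> herm (madd A B)"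
  by (metis herm_cases madd_hmat herm_hmat)

lemma herm_mscale: "herm A \<Longrightarrow> herm (mscale s A)"
  by (metis herm_cases mscale_hmat herm_hmat)

lemma herm_Zhat: "herm P \<Longrightarrow> herm Z \<Longrightarrow> herm X \<Longrightarrow> herm (Zhat P Z X)"
  unfolding Zhat_def by (intro herm_madd herm_mscale herm_jordan)

section \<open>Automorphisms of the Jordan algebra\<close>

definition jordan_aut :: "(omat \<Rightarrow> omat) \<Rightarrow> bool" where
  "jordan_aut f \<longleftrightarrow>
     (\<forall>X. herm X \<longrightarrow> herm (f X)) \<and>
     (\<forall>X Y. herm X \<longrightarrow> herm Y \<longrightarrow> f (X \<circ>\<^sub>J Y) = f X \<circ>\<^sub>J f Y) \<and>
     (\<forall>X Y. herm X \<longrightarrow> herm Y \<longrightarrow> f (madd X Y) = madd (f X) (f Y)) \<and>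
     (\<forall>s X. herm X \<longrightarrow> f (mscale s X) = mscale s (f X)) \<and>
     (\<forall>X. herm X \<longrightarrow> mtr (f X) = mtr X) \<and>
     (\<forall>X. herm X \<longrightarrow> f X = (\<lambda>i j. 0) \<longrightarrow> X = (\<lambda>i j. 0)) \<and>
     (\<forall>X. herm X \<longrightarrow> mreal X \<longrightarrow> mreal (f X))"

context
  fixes f :: "omat \<Rightarrow> omat"
  assumes f: "jordan_aut f"
begin

lemma jordan_aut_herm: "herm X \<Longrightarrow> herm (f X)"
  using f unfolding jordan_aut_def by blast

lemma jordan_aut_jordan: "herm X \<Longrightarrow> herm Y \<Longrightarrow> f (X \<circ>\<^sub>J Y) = f X \<circ>\<^sub>J f Y"
  using f unfolding jordan_aut_def by blast

lemma jordan_aut_madd: "herm X \<Longrightarrow> herm Y \<Longrightarrow> f (madd X Y) = madd (f X) (f Y)"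
  using f unfolding jordan_aut_def by blast

lemma jordan_aut_mscale: "herm X \<Longrightarrow> f (mscale s X) = mscale s (f X)"
  using f unfolding jordan_aut_def by blast

lemma jordan_aut_mtr: "herm X \<Longrightarrow> mtr (f X) = mtr X"
  using f unfolding jordan_aut_def by blast

lemma jordan_aut_eq_0: "herm X \<Longrightarrow> f X = (\<lambda>i j. 0) \<Longrightarrow> X = (\<lambda>i j. 0)"
  using f unfolding jordan_aut_def by blast

lemma jordan_aut_mreal: "herm X \<Longrightarrow> mreal X \<Longrightarrow> mreal (f X)"
  using f unfolding jordan_aut_def by blast

lemma jordan_aut_OP2: "P \<in> OP2 \<Longrightarrow> f P \<in> OP2"
  unfolding OP2_def
  by (auto simp: jordan_aut_herm jordan_aut_mreal jordan_aut_mtr simp flip: jordan_aut_jordan)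

lemma jordan_aut_Zhat:
  assumes "herm P" "herm Z" "herm X"
  shows "f (Zhat P Z X) = Zhat (f P) (f Z) (f X)"
  unfolding Zhat_def using assms
  by (simp add: herm_jordan herm_madd herm_mscale jordan_aut_herm jordan_aut_jordan jordan_aut_madd
      jordan_aut_mscale)

lemma jordan_aut_Zhat_funpow:
  assumes "herm P" "herm Z" "herm X"
  shows "f ((Zhat P Z ^^ n) X) = (Zhat (f P) (f Z) ^^ n) (f X)"
proof -
  have "herm ((Zhat P Z ^^ n) X) \<and> f ((Zhat P Z ^^ n) X) = (Zhat (f P) (f Z) ^^ n) (f X)"
    by (induct n) (simp_all add: assms herm_Zhat jordan_aut_Zhat)
  then show ?thesis ..
qed

end

lemma jordan_aut_comp:
  assumes f: "jordan_aut f" and g: "jordan_aut g"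
  shows "jordan_aut (g \<circ> f)"
  unfolding jordan_aut_def comp_def
proof (intro conjI allI impI)
  fix X Y s assume X: "herm X" and Y: "herm Y"
  show "herm (g (f X))" by (simp add: X f g jordan_aut_herm)
  show "g (f (X \<circ>\<^sub>J Y)) = g (f X) \<circ>\<^sub>J g (f Y)"
    by (simp add: X Y f g jordan_aut_herm jordan_aut_jordan)
  show "g (f (madd X Y)) = madd (g (f X)) (g (f Y))"
    by (simp add: X Y f g jordan_aut_herm jordan_aut_madd)
  show "g (f (mscale s X)) = mscale s (g (f X))"
    by (simp add: X f g jordan_aut_herm jordan_aut_mscale)
  show "mtr (g (f X)) = mtr X"
    by (simp add: X f g jordan_aut_herm jordan_aut_mtr)
  show "X = (\<lambda>i j. 0)" if "g (f X) = (\<lambda>i j. 0)"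
    using that X f g jordan_aut_herm jordan_aut_eq_0 by blast
  show "mreal (g (f X))" if "mreal X"
    using that X f g jordan_aut_herm jordan_aut_mreal by blast
qed

definition offdiag_map :: "(oc \<Rightarrow> oc) \<Rightarrow> (oc \<Rightarrow> oc) \<Rightarrow> (oc \<Rightarrow> oc) \<Rightarrow> omat \<Rightarrow> omat" where
  "offdiag_map T1 T2 T3 X =
     hmat (ore (X 0 0)) (ore (X 1 1)) (ore (X 2 2)) (T1 (X 1 2)) (T2 (X 2 0)) (T3 (X 0 1))"

lemma offdiag_map_hmat:
  "offdiag_map T1 T2 T3 (hmat a1 a2 a3 x1 x2 x3) = hmat a1 a2 a3 (T1 x1) (T2 x2) (T3 x3)"
  by (simp add: offdiag_map_def ore_ofc)

text \<open>The relations between the T_i are those of a related triple in the sense of triality.\<close>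
lemma jordan_aut_offdiag_map:
  assumes add: "\<And>x y. T1 (x + y) = T1 x + T1 y" "\<And>x y. T2 (x + y) = T2 x + T2 y"
      "\<And>x y. T3 (x + y) = T3 x + T3 y"
    and scale: "\<And>s x. T1 (oscale s x) = oscale s (T1 x)" "\<And>s x. T2 (oscale s x) = oscale s (T2 x)"
      "\<And>s x. T3 (oscale s x) = oscale s (T3 x)"
    and inner: "\<And>x y. oinner (T1 x) (T1 y) = oinner x y" "\<And>x y. oinner (T2 x) (T2 y) = oinner x y"
      "\<And>x y. oinner (T3 x) (T3 y) = oinner x y"
    and related: "\<And>x y. oconj (omul (T2 x) (T3 y)) = T1 (oconj (omul x y))"
      "\<And>x y. oconj (omul (T3 x) (T1 y)) = T2 (oconj (omul x y))"
      "\<And>x y. oconj (omul (T1 x) (T2 y)) = T3 (oconj (omul x y))"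
    and inj: "\<And>x. T1 x = 0 \<Longrightarrow> x = 0" "\<And>x. T2 x = 0 \<Longrightarrow> x = 0" "\<And>x. T3 x = 0 \<Longrightarrow> x = 0"
    and real: "\<And>x. oreal x \<Longrightarrow> oreal (T1 x)" "\<And>x. oreal x \<Longrightarrow> oreal (T2 x)"
      "\<And>x. oreal x \<Longrightarrow> oreal (T3 x)"
  shows "jordan_aut (offdiag_map T1 T2 T3)"
  unfolding jordan_aut_def
proof (intro conjI allI impI)
  fix X Y s assume "herm X" "herm Y"
  then obtain a1 a2 a3 x1 x2 x3 b1 b2 b3 y1 y2 y3
    where X: "X = hmat a1 a2 a3 x1 x2 x3" and Y: "Y = hmat b1 b2 b3 y1 y2 y3"
    by (meson herm_cases)
  show "herm (offdiag_map T1 T2 T3 X)"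
    by (simp add: X offdiag_map_hmat)
  show "offdiag_map T1 T2 T3 (X \<circ>\<^sub>J Y) = offdiag_map T1 T2 T3 X \<circ>\<^sub>J offdiag_map T1 T2 T3 Y"
    unfolding X Y offdiag_map_hmat jordan_hmat hmat_eq_iff by (simp add: add scale inner related)
  show "offdiag_map T1 T2 T3 (madd X Y) = madd (offdiag_map T1 T2 T3 X) (offdiag_map T1 T2 T3 Y)"
    by (simp add: X Y offdiag_map_hmat madd_hmat add)
  show "offdiag_map T1 T2 T3 (mscale s X) = mscale s (offdiag_map T1 T2 T3 X)"
    by (simp add: X offdiag_map_hmat mscale_hmat scale)
  show "mtr (offdiag_map T1 T2 T3 X) = mtr X"
    by (simp add: X offdiag_map_hmat mtr_hmat)
  show "X = (\<lambda>i j. 0)" if "offdiag_map T1 T2 T3 X = (\<lambda>i j. 0)"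
    using that inj unfolding X offdiag_map_hmat hmat_zero[symmetric] hmat_eq_iff by blast
  show "mreal (offdiag_map T1 T2 T3 X)" if "mreal X"
    using that real by (simp add: X offdiag_map_hmat mreal_hmat_iff)
qed

context
  fixes u :: oc
  assumes unit: "onorm u = 1" and real: "oreal u"
begin

lemma unit_omul_eq_0: "omul u x = 0 \<Longrightarrow> x = 0"
  using oconj_omul_left_cancel[of u x] unit by (simp add: oscale_one omul_zero_right)

lemma omul_unit_eq_0: "omul x u = 0 \<Longrightarrow> x = 0"
  using omul_oconj_right_cancel[of x u] unit by (simp add: oscale_one omul_zero_left)

lemma unit_sandwich_eq_0: "omul (omul (oconj u) x) (oconj u) = 0 \<Longrightarrow> x = 0"
  using omul_oconj_right_cancel[of "omul (oconj u) x" "oconj u"] oconj_omul_left_cancel[of "oconj u" x]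
  by (simp add: unit oscale_one omul_zero_left omul_zero_right oconj_oconj onorm_oconj)

lemmas triality_simps = omul_add_left omul_add_right omul_oscale_left omul_oscale_right
  oinner_omul_left oinner_omul_right onorm_oconj unit oscale_one

lemma jordan_aut_triality2:
  "jordan_aut (offdiag_map (omul u) (\<lambda>y. omul y u) (\<lambda>z. omul (omul (oconj u) z) (oconj u)))"
  by (rule jordan_aut_offdiag_map)
    (simp_all only: triality_simps oconj_moufang oconj_moufang_left oconj_moufang_right mult_1,
     auto intro: unit_omul_eq_0 omul_unit_eq_0 unit_sandwich_eq_0 oreal_omul oreal_oconj real)

lemma jordan_aut_triality3:
  "jordan_aut (offdiag_map (\<lambda>z. omul (omul (oconj u) z) (oconj u)) (omul u) (\<lambda>y. omul y u))"
  by (rule jordan_aut_offdiag_map)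
    (simp_all only: triality_simps oconj_moufang oconj_moufang_left oconj_moufang_right mult_1,
     auto intro: unit_omul_eq_0 omul_unit_eq_0 unit_sandwich_eq_0 oreal_omul oreal_oconj real)

end

definition scalar_omat :: "(3 \<Rightarrow> 3 \<Rightarrow> complex) \<Rightarrow> omat" where
  "scalar_omat R = (\<lambda>i j. ofc (R i j))"

definition transpose3 :: "(3 \<Rightarrow> 3 \<Rightarrow> complex) \<Rightarrow> 3 \<Rightarrow> 3 \<Rightarrow> complex" where
  "transpose3 R = (\<lambda>i j. R j i)"

definition id3 :: "3 \<Rightarrow> 3 \<Rightarrow> complex" where
  "id3 = (\<lambda>i j. if i = j then 1 else 0)"

definition orth :: "(3 \<Rightarrow> 3 \<Rightarrow> complex) \<Rightarrow> bool" where
  "orth R \<longleftrightarrow> (\<forall>i j. R 0 i * R 0 j + R 1 i * R 1 j + R 2 i * R 2 j = id3 i j)"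

definition rot :: "(3 \<Rightarrow> 3 \<Rightarrow> complex) \<Rightarrow> omat \<Rightarrow> omat" where
  "rot R X = mmul (mmul (scalar_omat R) X) (scalar_omat (transpose3 R))"

lemmas scalar_omat_simps = scalar_omat_def mmul_three omul_add_left omul_add_right omul_oscale_left
  omul_oscale_right omul_ofc_left omul_ofc_right oscale_add oscale_oscale

lemma mmul_scalar_omat_assoc: "mmul (mmul (scalar_omat S) X) Y = mmul (scalar_omat S) (mmul X Y)"
  by (intro ext) (simp add: scalar_omat_simps ac_simps)

lemma mmul_scalar_omat_assoc_mid:
  "mmul (mmul X (scalar_omat S)) Y = mmul X (mmul (scalar_omat S) Y)"
  by (intro ext) (simp add: scalar_omat_simps ac_simps)

lemma mmul_scalar_omat_assoc_right:
  "mmul X (mmul Y (scalar_omat S)) = mmul (mmul X Y) (scalar_omat S)"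
  by (intro ext) (simp add: scalar_omat_simps ac_simps)

lemma mmul_scalar_omat_id3_left: "mmul (scalar_omat id3) Y = Y"
proof (intro ext)
  fix i j :: 3
  show "mmul (scalar_omat id3) Y i j = Y i j"
    using exhaust_three[of i]
    by (auto simp: mmul_three scalar_omat_def id3_def omul_ofc_left oscale_one oscale_zero_left)
qed

lemma mmul_scalar_omat_id3_right: "mmul Y (scalar_omat id3) = Y"
proof (intro ext)
  fix i j :: 3
  show "mmul Y (scalar_omat id3) i j = Y i j"
    using exhaust_three[of j]
    by (auto simp: mmul_three scalar_omat_def id3_def omul_ofc_right oscale_one oscale_zero_left)
qed

lemma orth_transpose_mmul:
  "orth R \<Longrightarrow> mmul (scalar_omat (transpose3 R)) (scalar_omat R) = scalar_omat id3"
  by (intro ext) (simp add: orth_def mmul_three scalar_omat_def transpose3_def omul_ofc_left oscale_ofc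
      flip: ofc_add)

lemma transpose3_transpose3 [simp]: "transpose3 (transpose3 R) = R"
  by (simp add: transpose3_def)

lemma rot_mmul:
  assumes "orth R"
  shows "mmul (rot R X) (rot R Y) = rot R (mmul X Y)"
proof -
  have "mmul (rot R X) (rot R Y) =
      mmul (mmul (mmul (scalar_omat R) X) (mmul (scalar_omat (transpose3 R)) (mmul (scalar_omat R) Y)))
        (scalar_omat (transpose3 R))"
    unfolding rot_def by (simp only: mmul_scalar_omat_assoc_right mmul_scalar_omat_assoc_mid)
  also have "mmul (scalar_omat (transpose3 R)) (mmul (scalar_omat R) Y) = Y"
    by (simp only: mmul_scalar_omat_assoc[symmetric] orth_transpose_mmul[OF assms]
        mmul_scalar_omat_id3_left)
  finally show ?thesis unfolding rot_def by (simp only: mmul_scalar_omat_assoc)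
qed

lemma rot_inverse:
  assumes "orth R"
  shows "rot (transpose3 R) (rot R X) = X"
proof -
  have "rot (transpose3 R) (rot R X) =
      mmul (mmul (mmul (scalar_omat (transpose3 R)) (mmul (scalar_omat R) X)) (scalar_omat (transpose3 R)))
        (scalar_omat R)"
    unfolding rot_def transpose3_transpose3 by (simp only: mmul_scalar_omat_assoc_right)
  also have "mmul (scalar_omat (transpose3 R)) (mmul (scalar_omat R) X) = X"
    by (simp only: mmul_scalar_omat_assoc[symmetric] orth_transpose_mmul[OF assms]
        mmul_scalar_omat_id3_left)
  finally show ?thesis
    by (simp only: mmul_scalar_omat_assoc_mid orth_transpose_mmul[OF assms] mmul_scalar_omat_id3_right)
qed

lemma oscale_sum: "oscale s (\<Sum>i\<in>A. f i) = (\<Sum>i\<in>A. oscale s (f i))"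
  by (induct A rule: infinite_finite_induct) (simp_all add: oscale_add oscale_zero)

lemma mmul_madd_left: "mmul (madd X Y) Z = madd (mmul X Z) (mmul Y Z)"
  by (simp add: mmul_def madd_def omul_add_left sum.distrib)

lemma mmul_madd_right: "mmul X (madd Y Z) = madd (mmul X Y) (mmul X Z)"
  by (simp add: mmul_def madd_def omul_add_right sum.distrib)

lemma mmul_mscale_left: "mmul (mscale s X) Y = mscale s (mmul X Y)"
  by (simp add: mmul_def mscale_def omul_oscale_left oscale_sum)

lemma mmul_mscale_right: "mmul X (mscale s Y) = mscale s (mmul X Y)"
  by (simp add: mmul_def mscale_def omul_oscale_right oscale_sum)

lemma rot_madd: "rot R (madd X Y) = madd (rot R X) (rot R Y)"
  by (simp add: rot_def mmul_madd_left mmul_madd_right)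

lemma rot_mscale: "rot R (mscale s X) = mscale s (rot R X)"
  by (simp add: rot_def mmul_mscale_left mmul_mscale_right)

lemma jordan_eq_mscale_madd: "X \<circ>\<^sub>J Y = mscale (1/2) (madd (mmul X Y) (mmul Y X))"
  by (simp add: jordan_def mscale_def madd_def)

lemma rot_jordan:
  assumes "orth R"
  shows "rot R (X \<circ>\<^sub>J Y) = rot R X \<circ>\<^sub>J rot R Y"
  unfolding jordan_eq_mscale_madd rot_mscale rot_madd rot_mmul[OF assms] ..

lemma rot_herm:
  assumes "herm X"
  shows "herm (rot R X)"
proof -
  obtain a1 a2 a3 x1 x2 x3 where X: "X = hmat a1 a2 a3 x1 x2 x3"
    using assms by (rule herm_cases)
  show ?thesis
    unfolding herm_def X
    by (simp add: rot_def transpose3_def scalar_omat_simps oconj_add oconj_oscale oconj_oconj oconj_ofc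
        oscale_ofc ac_simps)
qed

lemma rot_eq_0:
  assumes "orth R" "rot R X = (\<lambda>i j. 0)"
  shows "X = (\<lambda>i j. 0)"
proof -
  have "rot R' (\<lambda>i j. 0) = (\<lambda>i j. 0)" for R'
    by (intro ext) (simp add: rot_def mmul_three omul_zero_left omul_zero_right)
  then show ?thesis using rot_inverse[OF assms(1), of X] assms(2) by simp
qed

lemma rot_mreal:
  assumes "\<And>i j. Im (R i j) = 0" "mreal X"
  shows "mreal (rot R X)"
  using assms unfolding mreal_def rot_def mmul_three scalar_omat_def transpose3_def
  by (intro allI oreal_add oreal_omul oreal_ofc) simp_all

lemma rot_mtr:
  assumes "orth R" "herm X"
  shows "mtr (rot R X) = mtr X"
proof -
  obtain a1 a2 a3 x1 x2 x3 where X: "X = hmat a1 a2 a3 x1 x2 x3"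
    using assms(2) by (rule herm_cases)
  have "R 0 i * R 0 j + R 1 i * R 1 j + R 2 i * R 2 j = id3 i j" for i j
    using assms(1) by (simp add: orth_def)
  from this[of 0 0] this[of 0 1] this[of 0 2] this[of 1 1] this[of 1 2] this[of 2 2] show ?thesis
    unfolding X mtr_hmat
    by (simp add: mtr_def sum_UNIV_three rot_def scalar_omat_simps transpose3_def id3_def ore_add
        ore_oscale ore_ofc ore_oconj oinner_def[symmetric]) algebra
qed

lemma jordan_aut_rot:
  assumes "orth R" "\<And>i j. Im (R i j) = 0"
  shows "jordan_aut (rot R)"
  unfolding jordan_aut_def
  using assms rot_herm rot_jordan rot_madd rot_mscale rot_mtr rot_eq_0 rot_mreal by blast

definition givens :: "3 \<Rightarrow> 3 \<Rightarrow> real \<Rightarrow> real \<Rightarrow> 3 \<Rightarrow> 3 \<Rightarrow> complex" where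
  "givens p q c s = (\<lambda>i j.
     if i = j then (if i = p \<or> i = q then of_real c else 1)
     else if i = p \<and> j = q then of_real s
     else if i = q \<and> j = p then - of_real s else 0)"

lemma orth_givens:
  assumes "p \<noteq> q" "c * c + s * s = 1"
  shows "orth (givens p q c s)"
proof -
  have cs: "of_real c * of_real c + of_real s * of_real s = (1::complex)"
    using arg_cong[OF assms(2), of complex_of_real] by simp
  show ?thesis
    unfolding orth_def
  proof (intro allI)
    fix i j :: 3
    show "givens p q c s 0 i * givens p q c s 0 j + givens p q c s 1 i * givens p q c s 1 j
        + givens p q c s 2 i * givens p q c s 2 j = id3 i j"
      using assms(1) exhaust_three[of p] exhaust_three[of q] exhaust_three[of i] exhaust_three[of j] cs
      by (auto simp: givens_def id3_def algebra_simps)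
  qed
qed

lemma Im_givens: "Im (givens p q c s i j) = 0"
  by (simp add: givens_def)

section \<open>Moving a point of the octonionic projective plane to E11\<close>

lemma idempotent_offdiag_norm:
  fixes a b c p q r :: complex
  assumes "a * a + r + q = a" "b * b + r + p = b" "c * c + q + p = c" "a + b + c = 1"
  shows "r = a * b"
proof -
  have "c = 1 - a - b" using assms(4) by (simp add: algebra_simps)
  have "2 * r - ((a - a * a) + (b - b * b) - (c - c * c)) =
      (a * a + r + q - a) + (b * b + r + p - b) - (c * c + q + p - c)"
    by (simp add: algebra_simps)
  also have "\<dots> = 0" using assms(1-3) by simp
  finally have "2 * r = (a - a * a) + (b - b * b) - (c - c * c)" by simp
  also have "\<dots> = 2 * (a * b)"
    unfolding \<open>c = 1 - a - b\<close> by (simp add: algebra_simps)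
  finally show ?thesis by simp
qed

lemma OP2_hmatD:
  assumes "hmat a b c x1 x2 x3 \<in> OP2"
  shows "onorm x3 = a * b" "onorm x2 = a * c" "onorm x1 = b * c" "a + b + c = 1"
    "Im a = 0" "Im b = 0" "Im c = 0" "oreal x1" "oreal x2" "oreal x3"
proof -
  have "hmat a b c x1 x2 x3 \<circ>\<^sub>J hmat a b c x1 x2 x3 = hmat a b c x1 x2 x3"
    and trace: "a + b + c = 1" and real: "mreal (hmat a b c x1 x2 x3)"
    using assms by (auto simp: OP2_def mtr_hmat)
  then have sq: "a * a + onorm x3 + onorm x2 = a" "b * b + onorm x3 + onorm x1 = b"
      "c * c + onorm x2 + onorm x1 = c"
    unfolding jordan_hmat hmat_eq_iff by (simp_all add: onorm_def)
  show "onorm x3 = a * b"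
    using sq trace by (rule idempotent_offdiag_norm)
  show "onorm x2 = a * c"
    by (rule idempotent_offdiag_norm[where b = c and c = b and q = "onorm x3" and p = "onorm x1"])
      (use sq trace in \<open>simp_all add: ac_simps\<close>)
  show "onorm x1 = b * c"
    by (rule idempotent_offdiag_norm[where a = b and b = c and c = a and q = "onorm x3" and p = "onorm x2"])
      (use sq trace in \<open>simp_all add: ac_simps\<close>)
  show "a + b + c = 1" by (fact trace)
  show "Im a = 0" "Im b = 0" "Im c = 0" "oreal x1" "oreal x2" "oreal x3"
    using real by (simp_all add: mreal_hmat_iff)
qed

lemma nonneg_if_row_products_nonneg:
  fixes a b c :: real
  assumes "a + b + c = 1" "0 \<le> a * b" "0 \<le> a * c"
  shows "0 \<le> a"
proof -
  have "a = a * (a + b + c)" using assms(1) by simp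
  also have "\<dots> = a * a + a * b + a * c" by (simp add: distrib_left)
  finally show ?thesis using assms(2,3) zero_le_square[of a] by linarith
qed

lemma OP2_hmat_diag_nonneg:
  assumes "hmat a b c x1 x2 x3 \<in> OP2"
  shows "0 \<le> Re a" "0 \<le> Re b" "0 \<le> Re c"
proof -
  note P = OP2_hmatD[OF assms]
  have "0 \<le> Re (onorm x1)" "0 \<le> Re (onorm x2)" "0 \<le> Re (onorm x3)"
    using P(8-10) oreal_onorm by blast+
  then have "0 \<le> Re a * Re b" "0 \<le> Re a * Re c" "0 \<le> Re b * Re c"
    using P(1-3,5-7) by simp_all
  moreover have "Re a + Re b + Re c = 1"
    using arg_cong[OF P(4), of Re] by simp
  ultimately show "0 \<le> Re a" "0 \<le> Re b" "0 \<le> Re c"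
    using nonneg_if_row_products_nonneg[of "Re a" "Re b" "Re c"]
      nonneg_if_row_products_nonneg[of "Re b" "Re a" "Re c"]
      nonneg_if_row_products_nonneg[of "Re c" "Re a" "Re b"]
    by (simp_all add: ac_simps)
qed

lemma OP2_hmat_zero_diag:
  assumes "hmat a 0 c x1 x2 x3 \<in> OP2"
  shows "x1 = 0" "x3 = 0"
  using OP2_hmatD[OF assms] oreal_onorm_eq_0 by simp_all

abbreviation E11 :: omat where
  "E11 \<equiv> hmat 1 0 0 0 0 0"

lemma OP2_hmat_E11:
  assumes "hmat a 0 0 x1 x2 x3 \<in> OP2"
  shows "hmat a 0 0 x1 x2 x3 = E11"
  using OP2_hmatD[OF assms] oreal_onorm_eq_0 by (simp add: hmat_eq_iff)

lemma oreal_unit_multiple: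
  assumes "oreal x"
  obtains u t where "onorm u = 1" "oreal u" "omul x u = ofc (of_real t)" "0 \<le> t"
proof (cases "x = 0")
  case True
  have "onorm (ofc 1) = 1" "oreal (ofc 1)" "omul x (ofc 1) = ofc (of_real 0)"
    by (simp_all add: True onorm_ofc oreal_ofc omul_zero_left ofc_zero)
  then show ?thesis using that by fastforce
next
  case False
  have "Im (onorm x) = 0" "0 \<le> Re (onorm x)" "onorm x \<noteq> 0"
    using oreal_onorm[OF assms] oreal_onorm_eq_0[OF assms] False by auto
  then obtain t where t: "0 < t" "onorm x = of_real (t * t)"
    by (intro that[of "sqrt (Re (onorm x))"]) (auto simp: complex_eq_iff)
  define u where "u = oscale (of_real (1 / t)) (oconj x)"
  have "onorm u = 1"
    using t by (simp add: u_def onorm_oscale onorm_oconj field_simps)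
  moreover have "oreal u"
    unfolding u_def by (intro oreal_oscale oreal_oconj assms) simp
  moreover have "omul x u = ofc (of_real t)"
    using t by (simp add: u_def omul_oscale_right omul_oconj_self oscale_ofc field_simps)
  ultimately show ?thesis using that t(1) by simp
qed

text \<open>Rotating the singular block [[a, t], [t, b]] by the angle (c, s) makes its second diagonal
  entry vanish.\<close>
lemma rotation_angle_exists:
  fixes a b t :: real
  assumes "0 \<le> a" "0 \<le> b" "0 \<le> t" "t * t = a * b"
  obtains c s where "c * c + s * s = 1" "s * s * a - 2 * s * c * t + c * c * b = 0"
proof (cases "a + b = 0")
  case True
  then have "a = 0" "b = 0" using assms(1,2) by auto
  then show ?thesis using that[of 1 0] by simp
next
  case False
  then have pos: "0 < a + b" using assms by simp
  define c where "c = sqrt (a / (a + b))"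
  define s where "s = sqrt (b / (a + b))"
  have cc: "c * c = a / (a + b)" and ss: "s * s = b / (a + b)"
    using assms pos by (simp_all add: c_def s_def)
  have "s * c = sqrt (a * b) / (a + b)"
    using pos by (simp add: c_def s_def real_sqrt_mult[symmetric] real_sqrt_divide mult.commute)
  also have "sqrt (a * b) = t"
    using assms(3,4) by (metis real_sqrt_abs abs_of_nonneg power2_eq_square)
  finally have sc: "s * c = t / (a + b)" .
  have "c * c + s * s = 1"
    using pos by (simp add: cc ss add_divide_distrib[symmetric])
  moreover have "s * s * a - 2 * (s * c) * t + c * c * b = (b * a - 2 * (t * t) + a * b) / (a + b)"
    unfolding cc ss sc by (simp add: diff_divide_distrib add_divide_distrib)
  moreover have "b * a - 2 * (t * t) + a * b = 0"
    using assms(4) by simp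
  ultimately show ?thesis using that by (simp add: mult.assoc)
qed

lemmas rot_entry_simps = rot_def scalar_omat_simps transpose3_def givens_def hmat_simps ore_add
  ore_oscale ore_ofc ore_oconj oscale_zero_left ore_zero

lemma ore_rot_givens_01:
  "ore (rot (givens 0 1 c s) (hmat a1 a2 a3 x1 x2 x3) 1 1) = s * s * a1 - 2 * s * c * ore x3 + c * c * a2"
  by (simp add: rot_entry_simps algebra_simps)

lemma ore_rot_givens_02:
  "ore (rot (givens 0 2 c s) (hmat a1 a2 a3 x1 x2 x3) 1 1) = a2"
  "ore (rot (givens 0 2 c s) (hmat a1 a2 a3 x1 x2 x3) 2 2) = s * s * a1 - 2 * s * c * ore x2 + c * c * a3"
  by (simp_all add: rot_entry_simps algebra_simps)

lemma OP2_normalize_x3: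
  assumes "hmat a b c x1 x2 x3 \<in> OP2"
  obtains f y1 y2 t where "jordan_aut f" "f (hmat a b c x1 x2 x3) = hmat a b c y1 y2 (ofc (of_real t))"
    "0 \<le> t"
proof -
  obtain u t where u: "onorm u = 1" "oreal u" "omul x3 u = ofc (of_real t)" "0 \<le> t"
    using OP2_hmatD(10)[OF assms] by (rule oreal_unit_multiple)
  show ?thesis
    by (rule that[OF jordan_aut_triality3[OF u(1,2)] _ u(4)]) (simp add: offdiag_map_hmat u(3))
qed

lemma OP2_normalize_b:
  assumes P: "hmat a b c x1 x2 (ofc (of_real t)) \<in> OP2" and "0 \<le> t"
  obtains f a' c' z where "jordan_aut f" "f (hmat a b c x1 x2 (ofc (of_real t))) = hmat a' 0 c' 0 z 0"
proof -
  have "t * t = Re a * Re b"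
    using arg_cong[OF OP2_hmatD(1)[OF P], of Re] OP2_hmatD(5,6)[OF P] by (simp add: onorm_ofc)
  then obtain C S where CS: "C * C + S * S = 1" "S * S * Re a - 2 * S * C * t + C * C * Re b = 0"
    using rotation_angle_exists OP2_hmat_diag_nonneg(1,2)[OF P] \<open>0 \<le> t\<close> by metis
  define f where "f = rot (givens 0 1 C S)"
  have f: "jordan_aut f"
    unfolding f_def by (intro jordan_aut_rot orth_givens Im_givens CS(1)) simp
  define Q where "Q = f (hmat a b c x1 x2 (ofc (of_real t)))"
  have Q: "Q \<in> OP2"
    unfolding Q_def by (rule jordan_aut_OP2[OF f P])
  have "ore (Q 1 1) = of_real (S * S * Re a - 2 * S * C * t + C * C * Re b)"
    unfolding Q_def f_def ore_rot_givens_01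
    using OP2_hmatD(5,6)[OF P] by (simp add: complex_eq_iff ore_ofc)
  then have "Q = hmat (ore (Q 0 0)) 0 (ore (Q 2 2)) (Q 1 2) (Q 2 0) (Q 0 1)"
    using hmat_of_herm[of Q] Q CS(2) by (simp add: OP2_def)
  with Q have "Q = hmat (ore (Q 0 0)) 0 (ore (Q 2 2)) 0 (Q 2 0) 0"
    using OP2_hmat_zero_diag by metis
  then show ?thesis
    using that f unfolding Q_def by blast
qed

lemma OP2_normalize_x2:
  assumes "hmat a 0 c 0 z 0 \<in> OP2"
  obtains f r where "jordan_aut f" "f (hmat a 0 c 0 z 0) = hmat a 0 c 0 (ofc (of_real r)) 0" "0 \<le> r"
proof -
  obtain u r where u: "onorm u = 1" "oreal u" "omul z u = ofc (of_real r)" "0 \<le> r"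
    using OP2_hmatD(9)[OF assms] by (rule oreal_unit_multiple)
  show ?thesis
    by (rule that[OF jordan_aut_triality2[OF u(1,2)] _ u(4)])
      (simp add: offdiag_map_hmat u(3) omul_zero_left omul_zero_right)
qed

lemma OP2_normalize_c:
  assumes P: "hmat a 0 c 0 (ofc (of_real r)) 0 \<in> OP2" and "0 \<le> r"
  obtains f where "jordan_aut f" "f (hmat a 0 c 0 (ofc (of_real r)) 0) = E11"
proof -
  have "r * r = Re a * Re c"
    using arg_cong[OF OP2_hmatD(2)[OF P], of Re] OP2_hmatD(5,7)[OF P] by (simp add: onorm_ofc)
  then obtain C S where CS: "C * C + S * S = 1" "S * S * Re a - 2 * S * C * r + C * C * Re c = 0"
    using rotation_angle_exists OP2_hmat_diag_nonneg(1,3)[OF P] \<open>0 \<le> r\<close> by metis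
  define f where "f = rot (givens 0 2 C S)"
  have f: "jordan_aut f"
    unfolding f_def by (intro jordan_aut_rot orth_givens Im_givens CS(1)) simp
  define Q where "Q = f (hmat a 0 c 0 (ofc (of_real r)) 0)"
  have Q: "Q \<in> OP2"
    unfolding Q_def by (rule jordan_aut_OP2[OF f P])
  have "ore (Q 1 1) = 0"
    unfolding Q_def f_def ore_rot_givens_02 ..
  moreover have "ore (Q 2 2) = of_real (S * S * Re a - 2 * S * C * r + C * C * Re c)"
    unfolding Q_def f_def ore_rot_givens_02
    using OP2_hmatD(5,7)[OF P] by (simp add: complex_eq_iff ore_ofc)
  ultimately have "Q = hmat (ore (Q 0 0)) 0 0 (Q 1 2) (Q 2 0) (Q 0 1)"
    using hmat_of_herm[of Q] Q CS(2) by (simp add: OP2_def)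
  with Q have "Q = E11"
    using OP2_hmat_E11 by metis
  then show ?thesis
    using that f unfolding Q_def by blast
qed

theorem OP2_normal_form:
  assumes "P \<in> OP2"
  obtains f where "jordan_aut f" "f P = E11"
proof -
  obtain a b c x1 x2 x3 where P: "P = hmat a b c x1 x2 x3"
    using assms by (auto simp: OP2_def elim: herm_cases)
  obtain f1 y1 y2 t where f1: "jordan_aut f1" "f1 P = hmat a b c y1 y2 (ofc (of_real t))" "0 \<le> t"
    using OP2_normalize_x3 assms unfolding P by metis
  obtain f2 a' c' z where f2: "jordan_aut f2" "f2 (f1 P) = hmat a' 0 c' 0 z 0"
    using OP2_normalize_b jordan_aut_OP2[OF f1(1) assms] f1(2,3) by metis
  obtain f3 r where f3: "jordan_aut f3" "f3 (f2 (f1 P)) = hmat a' 0 c' 0 (ofc (of_real r)) 0" "0 \<le> r"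
    using OP2_normalize_x2 jordan_aut_OP2[OF f2(1) jordan_aut_OP2[OF f1(1) assms]] f2(2) by metis
  obtain f4 where f4: "jordan_aut f4" "f4 (f3 (f2 (f1 P))) = E11"
    using OP2_normalize_c jordan_aut_OP2[OF f3(1) jordan_aut_OP2[OF f2(1) jordan_aut_OP2[OF f1(1) assms]]]
      f3(2,3) by metis
  show ?thesis
  proof (rule that)
    show "jordan_aut (f4 \<circ> f3 \<circ> f2 \<circ> f1)"
      by (intro jordan_aut_comp f1(1) f2(1) f3(1) f4(1))
    show "(f4 \<circ> f3 \<circ> f2 \<circ> f1) P = E11"
      using f4(2) by simp
  qed
qed

section \<open>The operator Z-hat at E11\<close>

lemma oscale_coords:
  "fst (fst (fst (oscale s x))) = s * fst (fst (fst x))" "snd (fst (fst (oscale s x))) = s * snd (fst (fst x))"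
  "fst (snd (fst (oscale s x))) = s * fst (snd (fst x))" "snd (snd (fst (oscale s x))) = s * snd (snd (fst x))"
  "fst (fst (snd (oscale s x))) = s * fst (fst (snd x))" "snd (fst (snd (oscale s x))) = s * snd (fst (snd x))"
  "fst (snd (snd (oscale s x))) = s * fst (snd (snd x))" "snd (snd (snd (oscale s x))) = s * snd (snd (snd x))"
  by (induct x rule: oc_induct, simp add: oc_defs)+

text \<open>An identity between complex linear combinations of octonions, with the octonion products
  occurring in it treated as atoms, reduces to eight identities between their coordinates.\<close>
lemmas oc_coord_simps = prod_eq_iff fst_add snd_add fst_diff snd_diff fst_uminus snd_uminus
  fst_zero snd_zero oscale_coords

lemmas oc_linear_simps = omul_zero_left omul_zero_right oinner_zero_left oinner_zero_right oconj_zero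
  oscale_zero oscale_zero_left ofc_zero omul_ofc_left omul_ofc_right oconj_omul oconj_add oconj_oscale
  oconj_oconj oconj_ofc oscale_add_left oscale_add omul_add_left omul_add_right omul_oscale_left
  omul_oscale_right oscale_oscale omul_minus_left omul_minus_right omul_diff_left omul_diff_right
  oconj_minus oconj_diff oscale_minus oscale_diff oscale_minus_left oscale_diff_left
  oinner_add_left oinner_add_right oinner_diff_left oinner_diff_right oinner_minus_left
  oinner_minus_right oinner_oscale_left oinner_oscale_right

lemma Zhat_E11_hmat:
  "Zhat E11 (hmat 0 0 0 0 z2 z3) (hmat a1 a2 a3 x1 x2 x3) =
     hmat (2 * (oinner z3 x3 + oinner z2 x2)) (-2 * oinner z3 x3) (-2 * oinner z2 x2)
       (- (oconj (omul x2 z3) + oconj (omul z2 x3)))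
       (oscale (a1 - a3) z2 - oconj (omul z3 x1)) (oscale (a1 - a2) z3 - oconj (omul x1 z2))"
  unfolding Zhat_def jordan_hmat mscale_hmat madd_hmat hmat_eq_iff
  by (simp only: oc_linear_simps, simp only: oc_coord_simps, intro conjI; algebra)

lemma Zhat_E11_offdiag_twice:
  "Zhat E11 (hmat 0 0 0 0 z2 z3) (Zhat E11 (hmat 0 0 0 0 z2 z3) (hmat 0 0 0 0 p2 p3)) =
     hmat 0 0 0 0
       (oscale (4 * (oinner z3 p3 + oinner z2 p2)) z2 + oscale (onorm z3) p2 - omul (omul z2 z3) (oconj p3))
       (oscale (4 * (oinner z3 p3 + oinner z2 p2)) z3 + oscale (onorm z2) p3 - omul (oconj p2) (omul z2 z3))"
proof -
  have polar3: "omul (omul z2 p3) (oconj z3) = oscale (2 * oinner z3 p3) z2 - omul (omul z2 z3) (oconj p3)"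
    using omul_oconj_right_polar[of z2 p3 z3] by (simp add: oinner_commute algebra_simps)
  have polar2: "omul (oconj z2) (omul p2 z3) = oscale (2 * oinner z2 p2) z3 - omul (oconj p2) (omul z2 z3)"
    using oconj_omul_left_polar[of z2 p2 z3] by (simp add: algebra_simps)
  show ?thesis
    unfolding Zhat_E11_hmat hmat_eq_iff
    by (simp only: oc_linear_simps polar2 polar3 oconj_omul_left_cancel omul_oconj_right_cancel,
        simp only: oc_coord_simps, intro conjI; algebra)
qed

lemma Zhat_E11_offdiag_four:
  assumes isotropic: "onorm z2 + onorm z3 = 0"
  shows "(Zhat E11 (hmat 0 0 0 0 z2 z3) ^^ 4) (hmat 0 0 0 0 p2 p3) = hmat 0 0 0 0 0 0"
proof -
  have n2: "onorm z2 = - onorm z3"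
    using isotropic by (simp add: eq_neg_iff_add_eq_0)
  have moufang2: "omul (omul z2 z3) (omul (omul (oconj z3) (oconj z2)) p2) = oscale (onorm z2 * onorm z3) p2"
    using omul_oconj_left_cancel[of "omul z2 z3" p2] by (simp add: oconj_omul onorm_omul)
  have moufang3: "omul (omul p3 (omul (oconj z3) (oconj z2))) (omul z2 z3) = oscale (onorm z2 * onorm z3) p3"
    using oconj_omul_right_cancel[of p3 "omul z2 z3"] by (simp add: oconj_omul onorm_omul)
  have inner2: "oinner z3 (omul (oconj p2) (omul z2 z3)) = onorm z3 * oinner z2 p2"
    by (simp add: oinner_omul_left_adjoint oinner_omul_right oinner_commute)
  have inner3: "oinner z2 (omul (omul z2 z3) (oconj p3)) = onorm z2 * oinner z3 p3"
    by (simp add: oinner_omul_right_adjoint oinner_omul_left oinner_commute)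
  have funpow4: "(f ^^ 4) x = f (f (f (f x)))" for f :: "omat \<Rightarrow> omat" and x
    by (simp add: numeral_eq_Suc)
  show ?thesis
    unfolding funpow4 Zhat_E11_offdiag_twice hmat_eq_iff
    by (simp only: oc_linear_simps oconj_omul_left_cancel omul_oconj_right_cancel moufang2 moufang3
        inner2 inner3 onorm_def[symmetric] n2 simp_thms, simp only: oc_coord_simps, intro conjI; algebra)
qed

lemma jordan_madd_right: "X \<circ>\<^sub>J madd A B = madd (X \<circ>\<^sub>J A) (X \<circ>\<^sub>J B)"
  unfolding jordan_def mmul_madd_left mmul_madd_right
  by (intro ext) (simp add: madd_def oscale_add ac_simps)

lemma mscale_madd: "mscale s (madd A B) = madd (mscale s A) (mscale s B)"
  by (simp add: mscale_def madd_def oscale_add)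

lemma Zhat_madd: "Zhat P Z (madd A B) = madd (Zhat P Z A) (Zhat P Z B)"
  unfolding Zhat_def jordan_madd_right mscale_madd by (intro ext) (simp add: madd_def ac_simps)

lemma Zhat_funpow_madd: "(Zhat P Z ^^ n) (madd A B) = madd ((Zhat P Z ^^ n) A) ((Zhat P Z ^^ n) B)"
  by (induct n) (simp_all add: Zhat_madd)

lemma herm_Zhat_funpow: "herm P \<Longrightarrow> herm Z \<Longrightarrow> herm X \<Longrightarrow> herm ((Zhat P Z ^^ n) X)"
  by (induct n) (simp_all add: herm_Zhat)

lemma TC_E11:
  assumes "Z \<in> TC E11"
  obtains z2 z3 where "Z = hmat 0 0 0 0 z2 z3"
proof -
  obtain a1 a2 a3 w1 w2 w3 where Z: "Z = hmat a1 a2 a3 w1 w2 w3"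
    using assms by (auto simp: TC_def elim: herm_cases)
  have "mscale 2 (E11 \<circ>\<^sub>J Z) = Z"
    using assms by (simp add: TC_def)
  then have "a1 = 0" "a2 = 0" "a3 = 0" "w1 = 0"
    unfolding Z jordan_hmat mscale_hmat hmat_eq_iff by (simp_all add: oc_linear_simps)
  then show ?thesis using that Z by blast
qed

lemma mtr_jordan_self_offdiag:
  "mtr (hmat 0 0 0 0 z2 z3 \<circ>\<^sub>J hmat 0 0 0 0 z2 z3) = 2 * (onorm z2 + onorm z3)"
  unfolding jordan_hmat mtr_hmat by (simp add: onorm_def oc_linear_simps)

lemma mtr_Zhat_E11:
  assumes "Z \<in> TC E11" "herm X"
  shows "mtr (Zhat E11 Z X) = 0"
proof -
  obtain z2 z3 where "Z = hmat 0 0 0 0 z2 z3" using assms(1) by (rule TC_E11)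
  moreover obtain a1 a2 a3 x1 x2 x3 where "X = hmat a1 a2 a3 x1 x2 x3"
    using assms(2) by (rule herm_cases)
  ultimately show ?thesis by (simp add: Zhat_E11_hmat mtr_hmat)
qed

text \<open>Z-hat maps the diagonal and x_1 entries into the (x_2, x_3)-part, on which its fourth power
  vanishes.\<close>
lemma Zhat_E11_nilpotent:
  assumes "Z \<in> TC E11" "mtr (Z \<circ>\<^sub>J Z) = 0" "herm X"
  shows "(Zhat E11 Z ^^ 5) X = (\<lambda>i j. 0)"
proof -
  obtain z2 z3 where Z: "Z = hmat 0 0 0 0 z2 z3" using assms(1) by (rule TC_E11)
  have isotropic: "onorm z2 + onorm z3 = 0"
    using assms(2) unfolding Z mtr_jordan_self_offdiag by (simp only: mult_eq_0_iff) simp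
  obtain a1 a2 a3 x1 x2 x3 where X: "X = hmat a1 a2 a3 x1 x2 x3" using assms(3) by (rule herm_cases)
  have split: "X = madd (hmat a1 a2 a3 x1 0 0) (hmat 0 0 0 0 x2 x3)"
    by (simp add: X madd_hmat)
  have funpow5: "(f ^^ 5) x = (f ^^ 4) (f x)" "(f ^^ 5) x = f ((f ^^ 4) x)"
    for f :: "omat \<Rightarrow> omat" and x
    by (simp_all add: numeral_eq_Suc)
  have five_zero: "(Zhat E11 Z ^^ 5) (hmat 0 0 0 0 p2 p3) = hmat 0 0 0 0 0 0" for p2 p3
  proof -
    have "Zhat E11 Z (hmat 0 0 0 0 0 0) = hmat 0 0 0 0 0 0"
      unfolding Z Zhat_E11_hmat by (simp add: oc_linear_simps)
    then show ?thesis
      using Zhat_E11_offdiag_four[OF isotropic] unfolding Z funpow5(2) by simp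
  qed
  have "Zhat E11 Z (hmat a1 a2 a3 x1 0 0) =
      hmat 0 0 0 0 (oscale (a1 - a3) z2 - oconj (omul z3 x1)) (oscale (a1 - a2) z3 - oconj (omul x1 z2))"
    unfolding Z Zhat_E11_hmat by (simp add: oc_linear_simps)
  then have diag_part: "(Zhat E11 Z ^^ 5) (hmat a1 a2 a3 x1 0 0) = hmat 0 0 0 0 0 0"
    unfolding funpow5(1) Z using Zhat_E11_offdiag_four[OF isotropic] by simp
  have "(Zhat E11 Z ^^ 5) X =
      madd ((Zhat E11 Z ^^ 5) (hmat a1 a2 a3 x1 0 0)) ((Zhat E11 Z ^^ 5) (hmat 0 0 0 0 x2 x3))"
    by (subst split) (rule Zhat_funpow_madd)
  also have "\<dots> = (\<lambda>i j. 0)"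
    by (simp add: diag_part five_zero madd_def hmat_zero)
  finally show ?thesis .
qed

lemma jordan_aut_TC:
  assumes f: "jordan_aut f" and "herm P" "Z \<in> TC P"
  shows "f Z \<in> TC (f P)"
proof -
  have "herm Z" and "mscale 2 (P \<circ>\<^sub>J Z) = Z" using assms(3) by (auto simp: TC_def)
  then have "mscale 2 (f P \<circ>\<^sub>J f Z) = f Z"
    using f \<open>herm P\<close> by (metis herm_jordan jordan_aut_jordan jordan_aut_mscale)
  with \<open>herm Z\<close> show ?thesis by (simp add: TC_def f jordan_aut_herm)
qed

theorem proposition2p3:
  assumes "P \<in> OP2"
    and "Z \<in> TC P"
    and "mtr (Z \<circ>\<^sub>J Z) = 0"
  shows "(\<forall>X \<in> herm0. Zhat P Z X \<in> herm0) \<and> (\<forall>X \<in> herm0. (Zhat P Z ^^ 5) X = (\<lambda>i j. 0))"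
proof -
  obtain f where f: "jordan_aut f" and fP: "f P = E11"
    using assms(1) by (rule OP2_normal_form)
  have hP: "herm P" and hZ: "herm Z"
    using assms(1,2) by (simp_all add: OP2_def TC_def)
  have TC: "f Z \<in> TC E11"
    using jordan_aut_TC[OF f hP assms(2)] fP by simp
  have isotropic: "mtr (f Z \<circ>\<^sub>J f Z) = 0"
    using assms(3) by (simp add: hZ herm_jordan f jordan_aut_mtr flip: jordan_aut_jordan)
  have traceless: "Zhat P Z X \<in> herm0" and nilpotent: "(Zhat P Z ^^ 5) X = (\<lambda>i j. 0)"
    if "X \<in> herm0" for X
  proof -
    have hX: "herm X" using that by (simp add: herm0_def)
    have "mtr (Zhat P Z X) = mtr (Zhat E11 (f Z) (f X))"
      by (metis f fP hP hX hZ herm_Zhat jordan_aut_Zhat jordan_aut_mtr)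
    then show "Zhat P Z X \<in> herm0"
      using mtr_Zhat_E11[OF TC jordan_aut_herm[OF f hX]] by (simp add: herm0_def hP hZ hX herm_Zhat)
    have "f ((Zhat P Z ^^ 5) X) = (\<lambda>i j. 0)"
      using Zhat_E11_nilpotent[OF TC isotropic jordan_aut_herm[OF f hX]]
      by (simp add: jordan_aut_Zhat_funpow[OF f hP hZ hX] fP)
    then show "(Zhat P Z ^^ 5) X = (\<lambda>i j. 0)"
      by (rule jordan_aut_eq_0[OF f herm_Zhat_funpow[OF hP hZ hX]])
  qed
  show ?thesis using traceless nilpotent by blast
qed

end
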